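(* Let $G$ be a digraph such that $\mathrm{wcol}_\infty(G)\le c$ for some constant $c$. Then $G$ does not contain a directed path of length greater than $2^c-2$, and every directed topological minor $H$ of $G$ satisfies $|E(H)|/|V(H)|\le 4c$.
   Context: For a linear order $L$ of $V(G)$, $u$ is weakly $r$-reachable from $v$ if there is a directed path of length at most $r$ from $u$ to $v$ or from $v$ to $u$ on which $u$ is the $L$-minimum; $\mathrm{WReach}_r[G,L,v]$ is the set of such $u$; $\mathrm{wcol}_r(G)=\min_L\max_{v}|\mathrm{WReach}_r[G,L,v]|$, and for an $n$-vertex digraph $\mathrm{wcol}_\infty(G)=\mathrm{wcol}_n(G)$. A digraph $H$ is a directed topological minor of $G$ if there is an injective map $\delta:V(H)\to V(G)$ and a map sending each arc $(u,v)$ of $H$ to a directed path in $G$ from $\delta(u)$ to $\delta(v)$ that is internally vertex-disjoint from all $\delta(w)$ and from all other such paths. *)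

theory Defs
  imports Complex_Main
begin

definition digraph :: "'a set \<Rightarrow> ('a \<times> 'a) set \<Rightarrow> bool" where
  "digraph V E \<longleftrightarrow> finite V \<and> E \<subseteq> V \<times> V \<and> (\<forall>v. (v, v) \<notin> E)"

text \<open>A directed path, as the nonempty list of its (distinct) vertices; its length is the
  number of arcs, i.e. length xs - 1.\<close>
definition dipath :: "'a set \<Rightarrow> ('a \<times> 'a) set \<Rightarrow> 'a list \<Rightarrow> bool" where
  "dipath V E xs \<longleftrightarrow> xs \<noteq> [] \<and> distinct xs \<and> set xs \<subseteq> V \<and>
     (\<forall>i. Suc i < length xs \<longrightarrow> (xs ! i, xs ! Suc i) \<in> E)"

definition dipath_from_to :: "'a set \<Rightarrow> ('a \<times> 'a) set \<Rightarrow> 'a \<Rightarrow> 'a \<Rightarrow> 'a list \<Rightarrow> bool" where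
  "dipath_from_to V E u v xs \<longleftrightarrow> dipath V E xs \<and> hd xs = u \<and> last xs = v"

definition WReach :: "nat \<Rightarrow> 'a set \<Rightarrow> ('a \<times> 'a) set \<Rightarrow> ('a \<times> 'a) set \<Rightarrow> 'a \<Rightarrow> 'a set" where
  "WReach r V E L v = {u. \<exists>xs. (dipath_from_to V E u v xs \<or> dipath_from_to V E v u xs)
      \<and> length xs - 1 \<le> r \<and> (\<forall>w\<in>set xs. (u, w) \<in> L)}"

definition wcol :: "nat \<Rightarrow> 'a set \<Rightarrow> ('a \<times> 'a) set \<Rightarrow> nat" where
  "wcol r V E = (LEAST k. \<exists>L. linear_order_on V L \<and> (\<forall>v\<in>V. card (WReach r V E L v) \<le> k))"

definition wcol_inf :: "'a set \<Rightarrow> ('a \<times> 'a) set \<Rightarrow> nat" where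
  "wcol_inf V E = wcol (card V) V E"

definition internal :: "'a list \<Rightarrow> 'a set" where
  "internal xs = set (butlast (tl xs))"

definition dir_top_minor :: "'b set \<Rightarrow> ('b \<times> 'b) set \<Rightarrow> 'a set \<Rightarrow> ('a \<times> 'a) set \<Rightarrow> bool" where
  "dir_top_minor VH EH V E \<longleftrightarrow> (\<exists>(\<delta>::'b \<Rightarrow> 'a) (P::'b \<times> 'b \<Rightarrow> 'a list).
     inj_on \<delta> VH \<and> \<delta> ` VH \<subseteq> V \<and>
     (\<forall>(a, b)\<in>EH. dipath_from_to V E (\<delta> a) (\<delta> b) (P (a, b))) \<and>
     (\<forall>e\<in>EH. internal (P e) \<inter> \<delta> ` VH = {}) \<and>
     (\<forall>e\<in>EH. \<forall>e'\<in>EH. e \<noteq> e' \<longrightarrow> internal (P e) \<inter> set (P e') = {}))"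

end

theory Submission
  imports Defs
begin

(* Fix an order L attaining wcol_inf.  On a directed path the L-least vertex m is weakly reachable
   from every vertex of the path.  Deleting m leaves a subpath with at least half of the other
   vertices, so by induction a path on n vertices has a vertex v with n + 1 \<le> 2^k, where k is the
   number of vertices of the path weakly reachable from v; hence n - 1 \<le> 2^c - 2.
   For a topological minor, map each arc ab to the L-least vertex m of its path, tagged with b if
   m = \<delta> a and with a otherwise; m is weakly reachable from the tagged endpoint.  The arc is
   recovered from its image, because a vertex shared by two distinct paths is internal to neither,
   hence an endpoint of both.  So |E(H)| \<le> 2c |V(H)|, which is even better than 4c. *)

lemma linear_order_on_has_least:
  assumes lin: "linear_order_on V L" and "finite S" "S \<noteq> {}" "S \<subseteq> V"
  obtains m where "m \<in> S" "\<forall>w\<in>S. (m, w) \<in> L"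
proof -
  have "wf ((L - Id) \<inter> S \<times> S)"
    using assms by (intro finite_acyclic_wf)
      (auto intro: acyclic_subset[OF linear_order_on_acyclic[OF lin]])
  then obtain m where m: "m \<in> S" "\<And>y. (y, m) \<in> (L - Id) \<inter> S \<times> S \<Longrightarrow> y \<notin> S"
    using \<open>S \<noteq> {}\<close> by (metis wfE_min ex_in_conv)
  have "(m, w) \<in> L" if "w \<in> S" for w
  proof (cases "w = m")
    case True
    then show ?thesis using lin m(1) \<open>S \<subseteq> V\<close> by (auto simp: order_on_defs refl_on_def)
  next
    case False
    then have "(w, m) \<notin> L" using m that by blast
    then show ?thesis
      using lin False m(1) that \<open>S \<subseteq> V\<close> by (auto simp: order_on_defs total_on_def)
  qed
  with m show thesis using that by blast
qed

lemma dipath_take: "dipath V E xs \<Longrightarrow> 0 < k \<Longrightarrow> dipath V E (take k xs)"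
  unfolding dipath_def by (auto dest: in_set_takeD)

lemma dipath_drop: "dipath V E xs \<Longrightarrow> k < length xs \<Longrightarrow> dipath V E (drop k xs)"
  unfolding dipath_def by (auto dest: in_set_dropD)

lemma dipath_from_to_slice:
  assumes "dipath V E xs" "i \<le> j" "j < length xs"
  shows "dipath_from_to V E (xs ! i) (xs ! j) (drop i (take (Suc j) xs))"
proof -
  let ?ys = "drop i (take (Suc j) xs)"
  have len: "length ?ys = Suc j - i" using assms by auto
  have nth: "\<And>k. k < length ?ys \<Longrightarrow> ?ys ! k = xs ! (i + k)"
    using assms by auto
  have "dipath V E ?ys"
    using assms dipath_take[OF assms(1), of "Suc j"] by (intro dipath_drop) auto
  moreover have "hd ?ys = xs ! i" "last ?ys = xs ! j"
    using nth[of 0] nth[of "length ?ys - 1"] len assms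
    by (auto simp: hd_conv_nth last_conv_nth)
  ultimately show ?thesis unfolding dipath_from_to_def by simp
qed

lemma dipath_subpath_between:
  assumes "dipath V E xs" "u \<in> set xs" "v \<in> set xs"
  obtains ys where "dipath_from_to V E u v ys \<or> dipath_from_to V E v u ys"
    "set ys \<subseteq> set xs" "length ys \<le> length xs"
proof -
  obtain i j where ij: "i < length xs" "xs ! i = u" "j < length xs" "xs ! j = v"
    using assms(2,3) by (meson in_set_conv_nth)
  have sub: "set (drop k (take l xs)) \<subseteq> set xs" "length (drop k (take l xs)) \<le> length xs"
    for k l by (auto dest: in_set_dropD in_set_takeD)
  show thesis
  proof (cases "i \<le> j")
    case True
    then have "dipath_from_to V E u v (drop i (take (Suc j) xs))"
      using dipath_from_to_slice[OF assms(1) True ij(3)] ij by simp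
    then show thesis using that sub by blast
  next
    case False
    then have "dipath_from_to V E v u (drop j (take (Suc i) xs))"
      using dipath_from_to_slice[OF assms(1) _ ij(1), of j] ij by simp
    then show thesis using that sub by blast
  qed
qed

lemma WReach_if_least_on_dipath:
  assumes "dipath V E xs" "m \<in> set xs" "v \<in> set xs" "\<forall>w\<in>set xs. (m, w) \<in> L"
    and "length xs - 1 \<le> r"
  shows "m \<in> WReach r V E L v"
proof -
  obtain ys where "dipath_from_to V E m v ys \<or> dipath_from_to V E v m ys"
    "set ys \<subseteq> set xs" "length ys \<le> length xs"
    using dipath_subpath_between[OF assms(1-3)] .
  then show ?thesis using assms(4,5) unfolding WReach_def by fastforce
qed

lemma WReach_subset: "WReach r V E L v \<subseteq> V"
proof
  fix u assume "u \<in> WReach r V E L v"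
  then obtain xs where "dipath_from_to V E u v xs \<or> dipath_from_to V E v u xs"
    unfolding WReach_def by blast
  then show "u \<in> V" unfolding dipath_from_to_def dipath_def
    by (metis hd_in_set last_in_set subsetD)
qed

lemma length_dipath_le_card:
  assumes "finite V" "dipath V E xs"
  shows "length xs \<le> card V"
  using assms distinct_card[of xs] card_mono[of V "set xs"] unfolding dipath_def by metis

lemma dipath_long_side_avoiding:
  assumes "dipath V E xs" "k < length xs" "2 \<le> length xs"
  obtains ps where "dipath V E ps" "length ps < length xs" "set ps \<subseteq> set xs"
    "xs ! k \<notin> set ps" "length xs + 1 \<le> 2 * (length ps + 1)"
proof -
  have "distinct (take k xs @ xs ! k # drop (Suc k) xs)"
    using assms(1,2) id_take_nth_drop[OF assms(2)] unfolding dipath_def by metis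
  then have avoid: "xs ! k \<notin> set (take k xs)" "xs ! k \<notin> set (drop (Suc k) xs)" by auto
  show thesis
  proof (cases "length xs - 1 - k \<le> k")
    case True
    then show thesis
      using that[OF dipath_take[OF assms(1)] _ set_take_subset avoid(1)] assms by auto
  next
    case False
    then show thesis
      using that[OF dipath_drop[OF assms(1)] _ set_drop_subset avoid(2)] assms by auto
  qed
qed

lemma dipath_has_vertex_with_large_WReach:
  assumes lin: "linear_order_on V L"
  shows "dipath V E xs \<Longrightarrow> length xs - 1 \<le> r \<Longrightarrow>
    \<exists>v\<in>set xs. length xs + 1 \<le> 2 ^ card (WReach r V E L v \<inter> set xs)"
proof (induction "length xs" arbitrary: xs rule: less_induct)
  case less
  let ?W = "\<lambda>v. WReach r V E L v"
  obtain m where m: "m \<in> set xs" "\<forall>w\<in>set xs. (m, w) \<in> L"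
    using linear_order_on_has_least[OF lin, of "set xs"] less.prems(1) unfolding dipath_def by auto
  have m_reach: "m \<in> ?W v" if "v \<in> set xs" for v
    using WReach_if_least_on_dipath[OF less.prems(1) m(1) that m(2) less.prems(2)] .
  show ?case
  proof (cases "length xs = 1")
    case True
    have "m \<in> ?W m \<inter> set xs" using m_reach[OF m(1)] m(1) by blast
    then have "1 \<le> card (?W m \<inter> set xs)" by (auto simp: Suc_le_eq card_gt_0_iff)
    then have "2 \<le> (2::nat) ^ card (?W m \<inter> set xs)"
      using power_increasing[of 1 _ "2::nat"] by simp
    then show ?thesis using True m(1) by (intro bexI[of _ m]) auto
  next
    case False
    obtain k where k: "k < length xs" "xs ! k = m" using m(1) by (meson in_set_conv_nth)
    have "2 \<le> length xs" using False k(1) by linarith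
    then obtain ps where ps: "dipath V E ps" "length ps < length xs" "set ps \<subseteq> set xs"
      "m \<notin> set ps" "length xs + 1 \<le> 2 * (length ps + 1)"
      using dipath_long_side_avoiding[OF less.prems(1) k(1), unfolded k(2)] by blast
    have "length ps - 1 \<le> r" using less.prems(2) ps(2) by linarith
    then obtain v where v: "v \<in> set ps" "length ps + 1 \<le> 2 ^ card (?W v \<inter> set ps)"
      using less.hyps[OF ps(2) ps(1)] by blast
    have vx: "v \<in> set xs" using v(1) ps(3) by auto
    have "insert m (?W v \<inter> set ps) \<subseteq> ?W v \<inter> set xs"
      using m_reach[OF vx] m(1) ps(3) by blast
    then have "card (insert m (?W v \<inter> set ps)) \<le> card (?W v \<inter> set xs)"
      by (rule card_mono[rotated]) simp
    then have "Suc (card (?W v \<inter> set ps)) \<le> card (?W v \<inter> set xs)"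
      using ps(4) by simp
    then have "2 ^ Suc (card (?W v \<inter> set ps)) \<le> (2::nat) ^ card (?W v \<inter> set xs)"
      by (rule power_increasing) simp
    moreover have "length xs + 1 \<le> 2 ^ Suc (card (?W v \<inter> set ps))"
      using ps(5) v(2) by simp
    ultimately show ?thesis using vx by (meson le_trans)
  qed
qed

lemma wcol_attained:
  assumes "finite V"
  obtains L where "linear_order_on V L" "\<forall>v\<in>V. card (WReach r V E L v) \<le> wcol r V E"
proof -
  obtain L0 where "well_order_on V L0" using well_order_on by blast
  then have "linear_order_on V L0 \<and> (\<forall>v\<in>V. card (WReach r V E L0 v) \<le> card V)"
    using card_mono[OF assms WReach_subset] unfolding well_order_on_def by blast
  then show thesis
    using that LeastI_ex[of "\<lambda>k. \<exists>L. linear_order_on V L \<and> (\<forall>v\<in>V. card (WReach r V E L v) \<le> k)"]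
    unfolding wcol_def by blast
qed

lemma dipath_length_bound:
  assumes "finite V" "linear_order_on V L" "\<forall>v\<in>V. card (WReach r V E L v) \<le> c"
    and "dipath V E xs" "length xs - 1 \<le> r"
  shows "length xs + 1 \<le> 2 ^ c"
proof -
  obtain v where v: "v \<in> set xs" "length xs + 1 \<le> 2 ^ card (WReach r V E L v \<inter> set xs)"
    using dipath_has_vertex_with_large_WReach[OF assms(2,4,5)] by blast
  have "v \<in> V" using v(1) assms(4) unfolding dipath_def by auto
  then have "card (WReach r V E L v \<inter> set xs) \<le> c"
    using assms(1,3) card_mono[of "WReach r V E L v"] finite_subset[OF WReach_subset]
    by (meson Int_lower1 le_trans)
  then show ?thesis using v(2) power_increasing[of _ c "2::nat"] by (meson le_trans one_le_numeral)
qed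

definition minor_arc_code :: "('b \<Rightarrow> 'a) \<Rightarrow> ('b \<times> 'b \<Rightarrow> 'a) \<Rightarrow> 'b \<times> 'b \<Rightarrow> 'b \<times> 'a \<times> bool" where
  "minor_arc_code \<delta> m =
     (\<lambda>(a, b). if m (a, b) = \<delta> a then (b, m (a, b), True) else (a, m (a, b), False))"

lemma inj_on_minor_arc_code:
  assumes inj: "inj_on \<delta> VH" and EH: "EH \<subseteq> VH \<times> VH"
    and paths: "\<forall>(a, b)\<in>EH. dipath_from_to V E (\<delta> a) (\<delta> b) (P (a, b))"
    and disj: "\<forall>e\<in>EH. \<forall>e'\<in>EH. e \<noteq> e' \<longrightarrow> internal (P e) \<inter> set (P e') = {}"
    and mn: "\<forall>e\<in>EH. mn e \<in> set (P e)"
  shows "inj_on (minor_arc_code \<delta> mn) EH"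
proof -
  have end_if_shared: "mn e = \<delta> b"
    if hyps: "e = (a, b)" "e \<in> EH" "e' \<in> EH" "e \<noteq> e'" "mn e \<noteq> \<delta> a" "mn e \<in> set (P e')"
    for e e' a b
  proof (rule ccontr)
    assume "mn e \<noteq> \<delta> b"
    moreover obtain h t where "P e = h # t" "h = \<delta> a" "P e \<noteq> []" "last (P e) = \<delta> b"
      using paths hyps(1,2) unfolding dipath_from_to_def dipath_def by (cases "P e") auto
    ultimately have "mn e \<in> internal (P e)"
      using mn hyps(2,5) unfolding internal_def
      by (cases t rule: rev_cases) (auto simp: butlast_append)
    then show False using disj hyps by blast
  qed
  show ?thesis
    unfolding minor_arc_code_def
  proof (rule inj_onI, clarify)
    fix a b a' b' assume e: "(a, b) \<in> EH" "(a', b') \<in> EH" and eq: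
      "(if mn (a, b) = \<delta> a then (b, mn (a, b), True) else (a, mn (a, b), False)) =
       (if mn (a', b') = \<delta> a' then (b', mn (a', b'), True) else (a', mn (a', b'), False))"
    have in_VH: "a \<in> VH" "a' \<in> VH" "b \<in> VH" "b' \<in> VH" using e EH by auto
    show "a = a' \<and> b = b'"
    proof (cases "mn (a, b) = \<delta> a")
      case True
      then show ?thesis using eq inj in_VH by (auto simp: inj_on_def split: if_splits)
    next
      case False
      then have a: "a = a'" and m: "mn (a, b) = mn (a', b')" "mn (a', b') \<noteq> \<delta> a'"
        using eq by (auto split: if_splits)
      show ?thesis
      proof (rule ccontr)
        assume "\<not> (a = a' \<and> b = b')"
        then have "(a, b) \<noteq> (a', b')" by simp
        then have "\<delta> b = \<delta> b'"
          using end_if_shared[OF refl e(1) e(2) _ False] end_if_shared[OF refl e(2) e(1) _ m(2)]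
            mn e m(1) by force
        then show False using \<open>\<not> (a = a' \<and> b = b')\<close> a inj in_VH by (auto simp: inj_on_def)
      qed
    qed
  qed
qed

lemma dir_top_minor_card_arcs_le:
  assumes finV: "finite V" and lin: "linear_order_on V L"
    and bd: "\<forall>v\<in>V. card (WReach r V E L v) \<le> c" and r: "card V \<le> r"
    and H: "digraph VH EH" and minor: "dir_top_minor VH EH V E"
  shows "card EH \<le> 2 * c * card VH"
proof -
  have finVH: "finite VH" and EH: "EH \<subseteq> VH \<times> VH" using H unfolding digraph_def by auto
  obtain \<delta> :: "'b \<Rightarrow> 'a" and P where inj: "inj_on \<delta> VH" and \<delta>V: "\<delta> ` VH \<subseteq> V"
    and paths: "\<forall>(a, b)\<in>EH. dipath_from_to V E (\<delta> a) (\<delta> b) (P (a, b))"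
    and disj: "\<forall>e\<in>EH. \<forall>e'\<in>EH. e \<noteq> e' \<longrightarrow> internal (P e) \<inter> set (P e') = {}"
    using minor unfolding dir_top_minor_def by (elim exE conjE) (rule that; assumption)
  have path: "dipath V E (P (a, b))" "\<delta> a \<in> set (P (a, b))" "\<delta> b \<in> set (P (a, b))"
    "length (P (a, b)) - 1 \<le> r" if "(a, b) \<in> EH" for a b
  proof -
    show p: "dipath V E (P (a, b))" using paths that unfolding dipath_from_to_def by auto
    have "hd (P (a, b)) = \<delta> a" "last (P (a, b)) = \<delta> b" "P (a, b) \<noteq> []"
      using paths that unfolding dipath_from_to_def dipath_def by auto
    then show "\<delta> a \<in> set (P (a, b))" "\<delta> b \<in> set (P (a, b))"
      by (metis hd_in_set, metis last_in_set)
    show "length (P (a, b)) - 1 \<le> r" using length_dipath_le_card[OF finV p] r by linarith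
  qed
  have "\<forall>e\<in>EH. \<exists>m. m \<in> set (P e) \<and> (\<forall>w\<in>set (P e). (m, w) \<in> L)"
  proof
    fix e assume "e \<in> EH"
    then have "dipath V E (P e)" using path(1) by (cases e) auto
    then obtain m where "m \<in> set (P e)" "\<forall>w\<in>set (P e). (m, w) \<in> L"
      using linear_order_on_has_least[OF lin, of "set (P e)"] unfolding dipath_def by auto
    then show "\<exists>m. m \<in> set (P e) \<and> (\<forall>w\<in>set (P e). (m, w) \<in> L)" by blast
  qed
  then obtain mn where mn: "\<forall>e\<in>EH. mn e \<in> set (P e) \<and> (\<forall>w\<in>set (P e). (mn e, w) \<in> L)"
    by (rule bchoice[elim_format]) blast
  define S where "S = Sigma VH (\<lambda>x. WReach r V E L (\<delta> x) \<times> (UNIV :: bool set))"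
  have "minor_arc_code \<delta> mn ` EH \<subseteq> S"
  proof (rule image_subsetI)
    fix e assume "e \<in> EH"
    then obtain a b where e: "e = (a, b)" and ab: "(a, b) \<in> EH" by (cases e) auto
    have "mn (a, b) \<in> WReach r V E L (\<delta> x)" if "x \<in> {a, b}" for x
      using WReach_if_least_on_dipath[OF path(1)[OF ab] _ _ _ path(4)[OF ab]] path(2,3)[OF ab]
        mn ab that by blast
    moreover have "a \<in> VH" "b \<in> VH" using ab EH by auto
    ultimately show "minor_arc_code \<delta> mn e \<in> S" unfolding e minor_arc_code_def S_def by fastforce
  qed
  moreover have "inj_on (minor_arc_code \<delta> mn) EH"
    using inj_on_minor_arc_code[OF inj EH paths disj] mn by blast
  moreover have "finite S"
    unfolding S_def using finVH finite_subset[OF WReach_subset finV] by auto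
  ultimately have "card EH \<le> card S" using card_inj_on_le by blast
  also have "card S = (\<Sum>x\<in>VH. card (WReach r V E L (\<delta> x)) * 2)"
    unfolding S_def using finVH finite_subset[OF WReach_subset finV] by (simp add: card_cartesian_product)
  also have "\<dots> \<le> (\<Sum>x\<in>VH. c * 2)"
    using bd \<delta>V by (intro sum_mono) auto
  finally show ?thesis by (simp add: mult.commute)
qed

theorem mainTheorem19:
  fixes V :: "'a set" and E :: "('a \<times> 'a) set" and c :: nat
  assumes "digraph V E"
    and "wcol_inf V E \<le> c"
  shows "\<not> (\<exists>xs. dipath V E xs \<and> int (length xs) - 1 > 2 ^ c - 2) \<and>
         (\<forall>(VH :: 'b set) EH. digraph VH EH \<and> dir_top_minor VH EH V E \<longrightarrow>
           real (card EH) / real (card VH) \<le> 4 * real c)"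
proof -
  have finV: "finite V" using assms(1) unfolding digraph_def by auto
  obtain L where lin: "linear_order_on V L"
    and "\<forall>v\<in>V. card (WReach (card V) V E L v) \<le> wcol (card V) V E"
    using wcol_attained[OF finV] .
  then have bd: "\<forall>v\<in>V. card (WReach (card V) V E L v) \<le> c"
    using assms(2) unfolding wcol_inf_def by (blast intro: le_trans)
  have "int (length xs) + 1 \<le> 2 ^ c" if "dipath V E xs" for xs
  proof -
    have "length xs + 1 \<le> 2 ^ c"
      using dipath_length_bound[OF finV lin bd that] length_dipath_le_card[OF finV that] by simp
    then have "int (length xs + 1) \<le> int (2 ^ c)" by (simp only: of_nat_le_iff)
    then show ?thesis by simp
  qed
  then have "\<not> (\<exists>xs. dipath V E xs \<and> int (length xs) - 1 > 2 ^ c - 2)"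
    by force
  moreover have "real (card EH) / real (card VH) \<le> 4 * real c"
    if "digraph VH EH" "dir_top_minor VH EH V E" for VH :: "'b set" and EH
  proof -
    have "card EH \<le> 2 * c * card VH"
      using dir_top_minor_card_arcs_le[OF finV lin bd order_refl that] .
    then have "real (card EH) \<le> real (2 * c * card VH)" by (simp only: of_nat_le_iff)
    then show ?thesis by (cases "card VH = 0") (auto simp: divide_le_eq)
  qed
  ultimately show ?thesis by blast
qed

end
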